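(* (Preservation for $\lambda_{\mathrm{act}}$ terms.) If $\Gamma \mid B \vdash M : A$ and $M \longrightarrow_{\mathsf{M}} M'$, then $\Gamma \mid B \vdash M' : A$.
   Context: The calculus $\lambda_{\mathrm{act}}$ (a fine-grain call-by-value concurrent $\lambda$-calculus with typed actors). Types: $A,B,C ::= \mathbf{1} \mid A \xrightarrow{C} B \mid \mathsf{ActorRef}(A)$ (the annotation $C$ on a function arrow is the mailbox type of the actor evaluating the function body). $\alpha$ ranges over variables $x$ and names $a$. Values $V,W ::= \alpha \mid \lambda x.M \mid ()$. Computations $M,N ::= V\,W \mid \mathbf{let}\ x \Leftarrow M\ \mathbf{in}\ N \mid \mathbf{return}\ V \mid \mathbf{spawn}\ M \mid \mathbf{send}\ V\ W \mid \mathbf{receive} \mid \mathbf{self}$. Value typing $\Gamma\vdash V:A$: $\Gamma\vdash\alpha:A$ if $\alpha:A\in\Gamma$; $\Gamma\vdash\lambda x.M : A\xrightarrow{C}B$ if $\Gamma,x:A\mid C\vdash M:B$; $\Gamma\vdash():\mathbf 1$. Computation typing $\Gamma\mid C\vdash M:A$: $\Gamma\mid C\vdash V\,W:B$ if $\Gamma\vdash V:A\xrightarrow{C}B$ and $\Gamma\vdash W:A$; $\Gamma\mid C\vdash\mathbf{let}\ x \Leftarrow M\ \mathbf{in}\ N : B$ if $\Gamma\mid C\vdash M:A$ and $\Gamma,x:A\mid C\vdash N:B$; $\Gamma\mid C\vdash \mathbf{return}\ V:A$ if $\Gamma\vdash V:A$; $\Gamma\mid C\vdash\mathbf{send}\ V\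 W:\mathbf 1$ if $\Gamma\vdash V:A$ and $\Gamma\vdash W:\mathsf{ActorRef}(A)$; $\Gamma\mid A\vdash\mathbf{receive}:A$; $\Gamma\mid C\vdash\mathbf{spawn}\ M:\mathsf{ActorRef}(A)$ if $\Gamma\mid A\vdash M:\mathbf 1$; $\Gamma\mid A\vdash\mathbf{self}:\mathsf{ActorRef}(A)$. Evaluation contexts $E ::= [\,] \mid \mathbf{let}\ x \Leftarrow E\ \mathbf{in}\ M$. Term reduction $\longrightarrow_{\mathsf{M}}$: $(\lambda x.M)V\longrightarrow_{\mathsf{M}} M\{V/x\}$; $\mathbf{let}\ x \Leftarrow \mathbf{return}\ V\ \mathbf{in}\ M \longrightarrow_{\mathsf{M}} M\{V/x\}$; $E[M]\longrightarrow_{\mathsf{M}} E[M']$ if $M\longrightarrow_{\mathsf{M}} M'$. *)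

theory Defs
  imports Main
begin

text \<open>Types of lambda_act. Fun A C B is the arrow A -C-> B.\<close>
datatype ty = Unit | Fun ty ty ty | ActorRef ty

text \<open>Terms with de Bruijn indices for variables (Var) and atomic names (Name).\<close>
datatype val = Var nat | Name nat | Lam comp | UnitV
and comp = App val val | Let comp comp | Return val | Spawn comp
  | Send val val | Receive | Self

fun liftV :: "nat \<Rightarrow> val \<Rightarrow> val" and liftC :: "nat \<Rightarrow> comp \<Rightarrow> comp" where
  "liftV k (Var i) = (if i < k then Var i else Var (Suc i))"
| "liftV k (Name a) = Name a"
| "liftV k (Lam M) = Lam (liftC (Suc k) M)"
| "liftV k UnitV = UnitV"
| "liftC k (App V W) = App (liftV k V) (liftV k W)"
| "liftC k (Let M N) = Let (liftC k M) (liftC (Suc k) N)"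
| "liftC k (Return V) = Return (liftV k V)"
| "liftC k (Spawn M) = Spawn (liftC k M)"
| "liftC k (Send V W) = Send (liftV k V) (liftV k W)"
| "liftC k Receive = Receive"
| "liftC k Self = Self"

fun substV :: "nat \<Rightarrow> val \<Rightarrow> val \<Rightarrow> val" and substC :: "nat \<Rightarrow> val \<Rightarrow> comp \<Rightarrow> comp" where
  "substV k W (Var i) = (if i < k then Var i else if i = k then W else Var (i - 1))"
| "substV k W (Name a) = Name a"
| "substV k W (Lam M) = Lam (substC (Suc k) (liftV 0 W) M)"
| "substV k W UnitV = UnitV"
| "substC k W (App V1 V2) = App (substV k W V1) (substV k W V2)"
| "substC k W (Let M N) = Let (substC k W M) (substC (Suc k) (liftV 0 W) N)"
| "substC k W (Return V) = Return (substV k W V)"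
| "substC k W (Spawn M) = Spawn (substC k W M)"
| "substC k W (Send V1 V2) = Send (substV k W V1) (substV k W V2)"
| "substC k W Receive = Receive"
| "substC k W Self = Self"

text \<open>Typing environment Gamma: names get types via Nm (partial map), variables via
  the de Bruijn list Vs (index 0 = most recently bound).\<close>
inductive vtyp :: "(nat \<Rightarrow> ty option) \<Rightarrow> ty list \<Rightarrow> val \<Rightarrow> ty \<Rightarrow> bool"
  and ctyp :: "(nat \<Rightarrow> ty option) \<Rightarrow> ty list \<Rightarrow> ty \<Rightarrow> comp \<Rightarrow> ty \<Rightarrow> bool" where
  T_Var: "i < length Vs \<Longrightarrow> Vs ! i = A \<Longrightarrow> vtyp Nm Vs (Var i) A"
| T_Name: "Nm a = Some A \<Longrightarrow> vtyp Nm Vs (Name a) A"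
| T_Lam: "ctyp Nm (A # Vs) C M B \<Longrightarrow> vtyp Nm Vs (Lam M) (Fun A C B)"
| T_Unit: "vtyp Nm Vs UnitV Unit"
| T_App: "vtyp Nm Vs V (Fun A C B) \<Longrightarrow> vtyp Nm Vs W A \<Longrightarrow> ctyp Nm Vs C (App V W) B"
| T_Let: "ctyp Nm Vs C M A \<Longrightarrow> ctyp Nm (A # Vs) C N B \<Longrightarrow> ctyp Nm Vs C (Let M N) B"
| T_Return: "vtyp Nm Vs V A \<Longrightarrow> ctyp Nm Vs C (Return V) A"
| T_Send: "vtyp Nm Vs V A \<Longrightarrow> vtyp Nm Vs W (ActorRef A) \<Longrightarrow> ctyp Nm Vs C (Send V W) Unit"
| T_Receive: "ctyp Nm Vs A Receive A"
| T_Spawn: "ctyp Nm Vs A M Unit \<Longrightarrow> ctyp Nm Vs C (Spawn M) (ActorRef A)"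
| T_Self: "ctyp Nm Vs A Self (ActorRef A)"

text \<open>Term reduction; M{V/x} for the bound variable 0 is substC 0 V M.
  The congruence rule covers E[-] for E ::= [] | let x <= E in M.\<close>
inductive redM :: "comp \<Rightarrow> comp \<Rightarrow> bool" where
  R_Beta: "redM (App (Lam M) V) (substC 0 V M)"
| R_Let: "redM (Let (Return V) M) (substC 0 V M)"
| R_Ctx: "redM M M' \<Longrightarrow> redM (Let M N) (Let M' N)"

end

theory Submission
  imports Defs
begin

text \<open>Both redexes contract by substituting a value for bound variable 0, so preservation reduces
  to the substitution lemma; that lemma in turn needs weakening, because substituting under a
  binder lifts the substituted value.\<close>

lemma typing_liftV_liftC:
  shows "vtyp Nm Vs V A \<Longrightarrow> k \<le> length Vs \<Longrightarrow>
      vtyp Nm (take k Vs @ T # drop k Vs) (liftV k V) A"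
    and "ctyp Nm Vs C M A \<Longrightarrow> k \<le> length Vs \<Longrightarrow>
      ctyp Nm (take k Vs @ T # drop k Vs) C (liftC k M) A"
proof (induction arbitrary: k and k rule: vtyp_ctyp.inducts)
  case (T_Var i Vs A Nm)
  then show ?case
    by (auto intro!: vtyp_ctyp.T_Var simp: nth_append min_def nth_Cons' split: if_splits)
next
  case (T_Lam Nm A Vs C M B)
  then show ?case
    using T_Lam.IH[of "Suc k"] by (auto intro!: vtyp_ctyp.intros)
next
  case (T_Let Nm Vs C M A N B)
  then show ?case
    using T_Let.IH(2)[of "Suc k"] by (auto intro!: vtyp_ctyp.intros)
qed (auto intro: vtyp_ctyp.intros)

lemma vtyp_liftV_0: "vtyp Nm Vs V A \<Longrightarrow> vtyp Nm (T # Vs) (liftV 0 V) A"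
  using typing_liftV_liftC(1)[of Nm Vs V A 0 T] by simp

lemma typing_substV_substC:
  shows "vtyp Nm Vs' V A \<Longrightarrow> Vs' = take k Vs @ T # drop k Vs \<Longrightarrow> k \<le> length Vs \<Longrightarrow>
      vtyp Nm Vs W T \<Longrightarrow> vtyp Nm Vs (substV k W V) A"
    and "ctyp Nm Vs' C M A \<Longrightarrow> Vs' = take k Vs @ T # drop k Vs \<Longrightarrow> k \<le> length Vs \<Longrightarrow>
      vtyp Nm Vs W T \<Longrightarrow> ctyp Nm Vs C (substC k W M) A"
proof (induction arbitrary: k Vs W and k Vs W rule: vtyp_ctyp.inducts)
  case (T_Var i Vs' A Nm)
  then show ?case
    by (auto intro!: vtyp_ctyp.T_Var simp: nth_append min_def nth_Cons' split: if_splits)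
next
  case (T_Lam Nm A Vs' C M B)
  show ?case
    using T_Lam.prems T_Lam.IH[of "Suc k" "A # Vs" "liftV 0 W"] vtyp_liftV_0[of Nm Vs W T A]
    by (auto intro!: vtyp_ctyp.intros)
next
  case (T_Let Nm Vs' C M A N B)
  show ?case
    using T_Let.prems T_Let.IH(1)[of k Vs W] T_Let.IH(2)[of "Suc k" "A # Vs" "liftV 0 W"]
      vtyp_liftV_0[of Nm Vs W T A]
    by (auto intro!: vtyp_ctyp.intros)
qed (simp; blast intro: vtyp_ctyp.intros)+

lemma ctyp_substC_0:
  "ctyp Nm (T # Vs) C M A \<Longrightarrow> vtyp Nm Vs W T \<Longrightarrow> ctyp Nm Vs C (substC 0 W M) A"
  using typing_substV_substC(2)[where Vs'="T # Vs" and k=0] by simp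

inductive_cases ctyp_AppE: "ctyp Nm Vs C (App V W) B"
inductive_cases ctyp_LetE: "ctyp Nm Vs C (Let M N) B"
inductive_cases ctyp_ReturnE: "ctyp Nm Vs C (Return V) A"
inductive_cases vtyp_LamE: "vtyp Nm Vs (Lam M) (Fun A C B)"

theorem lemma9:
  assumes "ctyp Nm Vs B M A"
    and "redM M M'"
  shows "ctyp Nm Vs B M' A"
  using assms(2,1)
proof (induction arbitrary: A rule: redM.induct)
  case (R_Beta M V)
  then obtain A0 where "vtyp Nm Vs (Lam M) (Fun A0 B A)" and "vtyp Nm Vs V A0"
    by (auto elim: ctyp_AppE)
  then show ?case
    by (auto elim: vtyp_LamE intro: ctyp_substC_0)
next
  case (R_Let V M)
  then obtain A0 where "ctyp Nm Vs B (Return V) A0" and "ctyp Nm (A0 # Vs) B M A"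
    by (auto elim: ctyp_LetE)
  then show ?case
    by (auto elim: ctyp_ReturnE intro: ctyp_substC_0)
next
  case (R_Ctx M M' N)
  from R_Ctx.prems obtain A0 where "ctyp Nm Vs B M A0" and "ctyp Nm (A0 # Vs) B N A"
    by (auto elim: ctyp_LetE)
  then show ?case
    using R_Ctx.IH by (blast intro: vtyp_ctyp.T_Let)
qed

end
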